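(* Let $N\ge 1$, $\epsilon=1/N$, $F>0$, and let $\phi:(0,\infty)\to\mathbb{R}$ be twice differentiable, with $\phi''_{kF}:=\phi''(kF)$. Suppose $\phi''_{2F}\le 0$, $\phi''_{3F}\le 0$ and $\phi''_{kF}=0$ for $k\ge 4$. Consider the third-nearest-neighbour atomistic model, for which $\mathbf y_F$ is called a stable equilibrium if $$\epsilon\sum_{\ell=-N+1}^{N}\Big(\phi''_F|u'_\ell|^2+\phi''_{2F}|u'_\ell+u'_{\ell+1}|^2+\phi''_{3F}|u'_\ell+u'_{\ell+1}+u'_{\ell+2}|^2\Big)>0\quad\text{for all }\mathbf u\in\mathcal U\setminus\{\mathbf 0\}.$$ Then there is a constant $\eta_F$ with $2\le\eta_F\le 6$, uniquely determined by the deformation gradient $F$, such that $\mathbf y_F$ is a stable equilibrium of the atomistic model if and only if $$A_F^{(3)}-\epsilon^2\mu_\epsilon^2\big(\phi''_{2F}+\eta_F\phi''_{3F}\big)>0,$$ where $A_F^{(3)}=\phi''_F+4\phi''_{2F}+9\phi''_{3F}$.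
   Context: $\mathcal{U}$ is the space of real sequences $\mathbf u=(u_\ell)_{\ell\in\mathbb{Z}}$ with $u_{\ell+2N}=u_\ell$ and $\sum_{\ell=-N+1}^{N}u_\ell=0$; $(\mathbf y_F)_\ell=F\epsilon\ell$. For a sequence $\mathbf v$, $v'_\ell=(v_\ell-v_{\ell-1})/\epsilon$ and $v''_\ell=(v'_\ell-v'_{\ell-1})/\epsilon$. $\|\mathbf v\|_{\ell^2_\epsilon}=(\epsilon\sum_{\ell=-N+1}^N v_\ell^2)^{1/2}$ for $2N$-periodic $\mathbf v$. $\mu_\epsilon:=\inf_{\Psi\in\mathcal U\setminus\{\mathbf 0\}}\|\Psi''\|_{\ell^2_\epsilon}/\|\Psi'\|_{\ell^2_\epsilon}$, which equals $2\sin(\pi\epsilon/2)/\epsilon$. *)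

theory Defs
  imports "HOL-Analysis.Analysis"
begin

definition Uspace :: "nat \<Rightarrow> (int \<Rightarrow> real) set" where
  "Uspace N = {u. (\<forall>l. u (l + 2 * int N) = u l) \<and>
                  (\<Sum>l = - int N + 1 .. int N. u l) = 0}"

definition dq :: "real \<Rightarrow> (int \<Rightarrow> real) \<Rightarrow> int \<Rightarrow> real" where
  "dq eps v l = (v l - v (l - 1)) / eps"

definition l2eps :: "nat \<Rightarrow> real \<Rightarrow> (int \<Rightarrow> real) \<Rightarrow> real" where
  "l2eps N eps v = sqrt (eps * (\<Sum>l = - int N + 1 .. int N. (v l)\<^sup>2))"

definition mu_eps :: "nat \<Rightarrow> real" where
  "mu_eps N = (let eps = 1 / real N in
     Inf {l2eps N eps (dq eps (dq eps \<Psi>)) / l2eps N eps (dq eps \<Psi>) | \<Psi>.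
            \<Psi> \<in> Uspace N \<and> \<Psi> \<noteq> (\<lambda>_. 0)})"

text \<open>Stability of y_F in the third-nearest-neighbour atomistic model;
  p1, p2, p3 stand for phi''(F), phi''(2F), phi''(3F).\<close>
definition stable3 :: "nat \<Rightarrow> real \<Rightarrow> real \<Rightarrow> real \<Rightarrow> bool" where
  "stable3 N p1 p2 p3 = (let eps = 1 / real N in
     \<forall>u \<in> Uspace N - {\<lambda>_. 0}.
       eps * (\<Sum>l = - int N + 1 .. int N.
          p1 * (dq eps u l)\<^sup>2
        + p2 * (dq eps u l + dq eps u (l + 1))\<^sup>2
        + p3 * (dq eps u l + dq eps u (l + 1) + dq eps u (l + 2))\<^sup>2) > 0)"

end

theory Submission
  imports Defs
begin

text \<open>Write a = u' and R_k = \<Sum>_l a_l a_(l+k) for the periodic autocorrelations of the strain,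
  A = p1 + 4 p2 + 9 p3 and D = 2 R_0 - 2 R_1 = \<Sum>_l (a_l - a_(l-1))^2. The energy is
  p1 R_0 + p2 (2 R_0 + 2 R_1) + p3 (3 R_0 + 4 R_1 + 2 R_2), which equals both
  A R_0 - (p2 + 6 p3) D + p3 \<Sum>_l (a_l - 2 a_(l+1) + a_(l+2))^2  and
  A R_0 - (p2 + 2 p3) D - p3 \<Sum>_l (a_l - a_(l+2))^2.
  So for p3 \<le> 0 the energy lies between A R_0 - (p2 + 2 p3) D and A R_0 - (p2 + 6 p3) D.
  The Rayleigh quotient D / R_0 equals \<epsilon>^2 \<mu>_\<epsilon>^2 at its minimum, which exists since the quotient
  is scale invariant and the sup-normalised part of U is compact. The upper bound at a minimiser
  shows that stability forces the condition with \<eta> = 6, and the lower bound shows that the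
  condition with \<eta> = 2 implies stability.\<close>

definition periodic :: "nat \<Rightarrow> (int \<Rightarrow> 'a) \<Rightarrow> bool" where
  "periodic N f \<longleftrightarrow> (\<forall>l. f (l + 2 * int N) = f l)"

definition period_sum :: "nat \<Rightarrow> (int \<Rightarrow> real) \<Rightarrow> real" where
  "period_sum N f = (\<Sum>l = - int N + 1 .. int N. f l)"

lemma Uspace_iff: "u \<in> Uspace N \<longleftrightarrow> periodic N u \<and> period_sum N u = 0"
  by (simp add: Uspace_def periodic_def period_sum_def)

lemma periodic_comp_shift: "periodic N f \<Longrightarrow> periodic N (\<lambda>l. f (l + k))"
  unfolding periodic_def by (metis add.commute add.left_commute)

lemma periodic_shift_int:
  assumes "periodic N f"
  shows "f (l + k * (2 * int N)) = f l"
proof (induction k rule: int_induct[of _ 0])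
  case (step1 i)
  then show ?case using assms unfolding periodic_def
    by (metis add.assoc distrib_right mult_1)
next
  case (step2 i)
  then show ?case using assms unfolding periodic_def
    by (metis (no_types, opaque_lifting) diff_add_cancel left_diff_distrib' mult_1 add.assoc)
qed simp

lemma periodic_window:
  assumes "periodic N f" and "N \<ge> 1"
  obtains j where "j \<in> {- int N + 1 .. int N}" and "f l = f j"
proof
  define j where "j = (l + int N - 1) mod (2 * int N) - int N + 1"
  have pos: "2 * int N > 0" using assms(2) by simp
  show "j \<in> {- int N + 1 .. int N}"
    using pos_mod_bound[OF pos, of "l + int N - 1"] pos_mod_sign[OF pos, of "l + int N - 1"]
    unfolding j_def by auto
  have "l = j + (l + int N - 1) div (2 * int N) * (2 * int N)"
    unfolding j_def using div_mult_mod_eq[of "l + int N - 1" "2 * int N"] by (simp add: algebra_simps)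
  then show "f l = f j" by (metis periodic_shift_int assms(1))
qed

lemma period_sum_shift1:
  assumes "periodic N f" and "N \<ge> 1"
  shows "period_sum N (\<lambda>l. f (l + 1)) = period_sum N f"
proof -
  let ?I = "{- int N + 2 .. int N}"
  have "period_sum N (\<lambda>l. f (l + 1)) = sum f {- int N + 2 .. int N + 1}"
    unfolding period_sum_def
    using sum.reindex[of "\<lambda>l. l + 1" "{- int N + 1 .. int N}" f] by (simp add: inj_on_def)
  also have "{- int N + 2 .. int N + 1} = insert (int N + 1) ?I"
    using assms(2) by auto
  also have "sum f (insert (int N + 1) ?I) = f (- int N + 1) + sum f ?I"
    using assms(1)[unfolded periodic_def, rule_format, of "- int N + 1"] by simp
  also have "\<dots> = sum f (insert (- int N + 1) ?I)"
    by simp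
  also have "insert (- int N + 1) ?I = {- int N + 1 .. int N}"
    using assms(2) by auto
  finally show ?thesis unfolding period_sum_def .
qed

lemma period_sum_shift:
  assumes "periodic N f" and "N \<ge> 1"
  shows "period_sum N (\<lambda>l. f (l + k)) = period_sum N f"
proof (induction k rule: int_induct[of _ 0])
  case (step1 i)
  then show ?case
    using period_sum_shift1[OF periodic_comp_shift[OF assms(1)] assms(2), of i]
    by (simp add: add.assoc add.commute[of 1])
next
  case (step2 i)
  then show ?case
    using period_sum_shift1[OF periodic_comp_shift[OF assms(1)] assms(2), of "i - 1"]
    by (simp add: algebra_simps)
qed simp

lemma period_sum_add: "period_sum N (\<lambda>l. f l + g l) = period_sum N f + period_sum N g"
  unfolding period_sum_def by (simp add: sum.distrib)

lemma period_sum_diff: "period_sum N (\<lambda>l. f l - g l) = period_sum N f - period_sum N g"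
  unfolding period_sum_def by (simp add: sum_subtractf)

lemma period_sum_cmult: "period_sum N (\<lambda>l. c * f l) = c * period_sum N f"
  unfolding period_sum_def by (simp add: sum_distrib_left)

lemma period_sum_nonneg: "(\<And>l. f l \<ge> 0) \<Longrightarrow> period_sum N f \<ge> 0"
  unfolding period_sum_def by (simp add: sum_nonneg)

lemma period_sum_cong: "(\<And>l. f l = g l) \<Longrightarrow> period_sum N f = period_sum N g"
  by (metis ext)

definition autocorr :: "nat \<Rightarrow> (int \<Rightarrow> real) \<Rightarrow> int \<Rightarrow> real" where
  "autocorr N a k = period_sum N (\<lambda>l. a l * a (l + k))"

lemma autocorr_0: "autocorr N a 0 = period_sum N (\<lambda>l. (a l)\<^sup>2)"
  unfolding autocorr_def by (simp add: power2_eq_square)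

lemma autocorr_shift:
  assumes "periodic N a" and "N \<ge> 1"
  shows "period_sum N (\<lambda>l. a (l + j) * a (l + j + k)) = autocorr N a k"
proof -
  have "periodic N (\<lambda>l. a l * a (l + k))"
    using assms(1) periodic_comp_shift[OF assms(1)] unfolding periodic_def by simp
  then show ?thesis
    unfolding autocorr_def by (rule period_sum_shift[OF _ assms(2)])
qed

definition energy3 :: "nat \<Rightarrow> real \<Rightarrow> real \<Rightarrow> real \<Rightarrow> (int \<Rightarrow> real) \<Rightarrow> real" where
  "energy3 N p1 p2 p3 a = period_sum N (\<lambda>l.
      p1 * (a l)\<^sup>2 + p2 * (a l + a (l + 1))\<^sup>2 + p3 * (a l + a (l + 1) + a (l + 2))\<^sup>2)"

context
  fixes N :: nat and a :: "int \<Rightarrow> real"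
  assumes per: "periodic N a" and N: "N \<ge> 1"
begin

private lemmas shifted = autocorr_shift[OF per N]

text \<open>Expanded summands are written as products a (l + j) * a (l + j + k), even for j = 0 or
  k = 0, so that \<open>shifted\<close> turns their period sums into autocorrelations.\<close>

lemma period_sum_diff_sq:
  "period_sum N (\<lambda>l. (a l - a (l + k))\<^sup>2) = 2 * autocorr N a 0 - 2 * autocorr N a k"
proof -
  have "period_sum N (\<lambda>l. (a l - a (l + k))\<^sup>2)
      = period_sum N (\<lambda>l. a (l + 0) * a (l + 0 + 0) + a (l + k) * a (l + k + 0)
          - 2 * (a (l + 0) * a (l + 0 + k)))"
    by (rule period_sum_cong) (simp add: power2_eq_square algebra_simps)
  then show ?thesis
    by (simp only: period_sum_add period_sum_diff period_sum_cmult shifted)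
qed

lemma autocorr_uminus: "autocorr N a (- k) = autocorr N a k"
proof -
  have "autocorr N a (- k) = period_sum N (\<lambda>l. a (l + - k) * a (l + - k + k))"
    unfolding autocorr_def by (rule period_sum_cong) (simp add: mult.commute)
  then show ?thesis by (simp only: shifted)
qed

lemma second_diff_sq:
  "period_sum N (\<lambda>l. (a l - 2 * a (l + 1) + a (l + 2))\<^sup>2)
     = 6 * autocorr N a 0 - 8 * autocorr N a 1 + 2 * autocorr N a 2"
proof -
  have "period_sum N (\<lambda>l. (a l - 2 * a (l + 1) + a (l + 2))\<^sup>2)
      = period_sum N (\<lambda>l. a (l + 0) * a (l + 0 + 0) + 4 * (a (l + 1) * a (l + 1 + 0))
          + a (l + 2) * a (l + 2 + 0) - 4 * (a (l + 0) * a (l + 0 + 1))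
          - 4 * (a (l + 1) * a (l + 1 + 1)) + 2 * (a (l + 0) * a (l + 0 + 2)))"
    by (rule period_sum_cong) (simp add: power2_eq_square algebra_simps)
  then show ?thesis
    by (simp only: period_sum_add period_sum_diff period_sum_cmult shifted)
qed

lemma energy3_autocorr:
  "energy3 N p1 p2 p3 a = p1 * autocorr N a 0 + p2 * (2 * autocorr N a 0 + 2 * autocorr N a 1)
     + p3 * (3 * autocorr N a 0 + 4 * autocorr N a 1 + 2 * autocorr N a 2)"
proof -
  have "energy3 N p1 p2 p3 a
      = period_sum N (\<lambda>l. (p1 + p2 + p3) * (a (l + 0) * a (l + 0 + 0))
          + (p2 + p3) * (a (l + 1) * a (l + 1 + 0)) + p3 * (a (l + 2) * a (l + 2 + 0))
          + (2 * p2 + 2 * p3) * (a (l + 0) * a (l + 0 + 1))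
          + 2 * p3 * (a (l + 1) * a (l + 1 + 1)) + 2 * p3 * (a (l + 0) * a (l + 0 + 2)))"
    unfolding energy3_def by (rule period_sum_cong) (simp add: power2_eq_square algebra_simps)
  then show ?thesis
    by (simp only: period_sum_add period_sum_cmult shifted) (simp add: algebra_simps)
qed

lemma energy3_bounds:
  assumes "p3 \<le> 0"
  defines "D \<equiv> period_sum N (\<lambda>l. (a l - a (l - 1))\<^sup>2)"
  shows "energy3 N p1 p2 p3 a
           \<le> (p1 + 4 * p2 + 9 * p3) * period_sum N (\<lambda>l. (a l)\<^sup>2) - (p2 + 6 * p3) * D"
    and "energy3 N p1 p2 p3 a
           \<ge> (p1 + 4 * p2 + 9 * p3) * period_sum N (\<lambda>l. (a l)\<^sup>2) - (p2 + 2 * p3) * D"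
proof -
  have D: "D = 2 * autocorr N a 0 - 2 * autocorr N a 1"
    unfolding D_def using period_sum_diff_sq[of "- 1"] by (simp add: autocorr_uminus)
  have "0 \<le> period_sum N (\<lambda>l. (a l - 2 * a (l + 1) + a (l + 2))\<^sup>2)"
    by (rule period_sum_nonneg) simp
  then have "p3 * (6 * autocorr N a 0 - 8 * autocorr N a 1 + 2 * autocorr N a 2) \<le> 0"
    using assms(1) by (simp add: second_diff_sq mult_nonpos_nonneg)
  then show "energy3 N p1 p2 p3 a
           \<le> (p1 + 4 * p2 + 9 * p3) * period_sum N (\<lambda>l. (a l)\<^sup>2) - (p2 + 6 * p3) * D"
    by (simp add: energy3_autocorr D autocorr_0[symmetric] algebra_simps)
  have "0 \<le> period_sum N (\<lambda>l. (a l - a (l + 2))\<^sup>2)"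
    by (rule period_sum_nonneg) simp
  then have "0 \<le> p3 * (2 * autocorr N a 2 - 2 * autocorr N a 0)"
    using assms(1) by (intro mult_nonpos_nonpos) (simp_all add: period_sum_diff_sq)
  then show "energy3 N p1 p2 p3 a
           \<ge> (p1 + 4 * p2 + 9 * p3) * period_sum N (\<lambda>l. (a l)\<^sup>2) - (p2 + 2 * p3) * D"
    by (simp add: energy3_autocorr D autocorr_0[symmetric] algebra_simps)
qed

end

definition grad_sq :: "nat \<Rightarrow> (int \<Rightarrow> real) \<Rightarrow> real" where
  "grad_sq N \<Psi> = period_sum N (\<lambda>l. (dq (1 / real N) \<Psi> l)\<^sup>2)"

definition grad_diff_sq :: "nat \<Rightarrow> (int \<Rightarrow> real) \<Rightarrow> real" where
  "grad_diff_sq N \<Psi> = period_sum N (\<lambda>l. (dq (1 / real N) \<Psi> l - dq (1 / real N) \<Psi> (l - 1))\<^sup>2)"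

definition rayleigh :: "nat \<Rightarrow> (int \<Rightarrow> real) \<Rightarrow> real" where
  "rayleigh N \<Psi> = grad_diff_sq N \<Psi> / grad_sq N \<Psi>"

lemma periodic_dq:
  assumes "periodic N u"
  shows "periodic N (dq e u)"
proof -
  have "periodic N (\<lambda>l. u (l + - 1))"
    by (rule periodic_comp_shift[OF assms])
  then show ?thesis
    using assms unfolding periodic_def dq_def by simp
qed

lemma grad_sq_pos:
  assumes "\<Psi> \<in> Uspace N" and "\<Psi> \<noteq> (\<lambda>_. 0)" and "N \<ge> 1"
  shows "grad_sq N \<Psi> > 0"
proof (rule ccontr)
  assume "\<not> grad_sq N \<Psi> > 0"
  moreover have "grad_sq N \<Psi> \<ge> 0"
    unfolding grad_sq_def by (rule period_sum_nonneg) simp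
  ultimately have "grad_sq N \<Psi> = 0" by simp
  then have "\<forall>l \<in> {- int N + 1 .. int N}. dq (1 / real N) \<Psi> l = 0"
    unfolding grad_sq_def period_sum_def by (subst (asm) sum_nonneg_eq_0_iff) auto
  then have step: "\<Psi> (i + 1) = \<Psi> i" if "- int N \<le> i" "i + 1 \<le> int N" for i
    using that assms(3) by (auto simp: dq_def)
  have const: "\<Psi> i = \<Psi> (- int N)" if "- int N \<le> i" "i \<le> int N" for i
    using that by (induction i rule: int_ge_induct) (use step in auto)
  have "0 = period_sum N \<Psi>"
    using assms(1) by (simp add: Uspace_iff)
  also have "\<dots> = (\<Sum>l = - int N + 1 .. int N. \<Psi> (- int N))"
    unfolding period_sum_def by (rule sum.cong) (auto intro: const)
  also have "\<dots> = 2 * real N * \<Psi> (- int N)"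
    by simp
  finally have zero: "\<Psi> (- int N) = 0"
    using assms(3) by simp
  have "\<Psi> l = 0" for l
  proof -
    obtain j where "j \<in> {- int N + 1 .. int N}" and "\<Psi> l = \<Psi> j"
      using periodic_window[OF _ assms(3)] assms(1) by (auto simp: Uspace_iff)
    then show ?thesis
      using const zero by simp
  qed
  with assms(2) show False by auto
qed

lemma rayleigh_scale:
  assumes "c \<noteq> 0"
  shows "rayleigh N (\<lambda>l. c * \<Psi> l) = rayleigh N \<Psi>"
proof -
  have dq: "dq e (\<lambda>l. c * \<Psi> l) l = c * dq e \<Psi> l" for e l
    unfolding dq_def by (simp add: algebra_simps)
  have "grad_sq N (\<lambda>l. c * \<Psi> l) = c\<^sup>2 * grad_sq N \<Psi>"
    "grad_diff_sq N (\<lambda>l. c * \<Psi> l) = c\<^sup>2 * grad_diff_sq N \<Psi>"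
    unfolding grad_sq_def grad_diff_sq_def dq period_sum_cmult[symmetric]
    by (simp_all add: power_mult_distrib right_diff_distrib[symmetric])
  then show ?thesis
    unfolding rayleigh_def using assms by simp
qed

lemma continuous_on_dq: "continuous_on UNIV (\<lambda>\<Psi>::int \<Rightarrow> real. dq e \<Psi> l)"
  unfolding dq_def divide_inverse by (intro continuous_intros continuous_on_product_coordinates)

lemma continuous_on_grad_sq: "continuous_on UNIV (grad_sq N)"
  unfolding grad_sq_def period_sum_def by (intro continuous_intros continuous_on_dq)

lemma continuous_on_grad_diff_sq: "continuous_on UNIV (grad_diff_sq N)"
  unfolding grad_diff_sq_def period_sum_def by (intro continuous_intros continuous_on_dq)

lemma closed_Uspace: "closed (Uspace N)"
  unfolding Uspace_def
  by (intro closed_Collect_conj closed_Collect_all closed_Collect_eq continuous_intros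
      continuous_on_product_coordinates)

lemma compact_unit_box: "compact {\<Psi>::int \<Rightarrow> real. \<forall>l. \<bar>\<Psi> l\<bar> \<le> 1}"
proof -
  have "compactin (product_topology (\<lambda>_. euclidean) UNIV) (PiE UNIV (\<lambda>_::int. {-1..1::real}))"
    by (simp add: compactin_PiE)
  moreover have "PiE UNIV (\<lambda>_::int. {-1..1::real}) = {\<Psi>. \<forall>l. \<bar>\<Psi> l\<bar> \<le> 1}"
    by (auto simp: PiE_def Pi_def abs_le_iff)
  ultimately show ?thesis
    by (simp add: euclidean_product_topology)
qed

text \<open>Asking for |\<Psi> l| = 1 on the window rather than anywhere keeps this set closed.\<close>

definition unit_Uspace :: "nat \<Rightarrow> (int \<Rightarrow> real) set" where
  "unit_Uspace N = {\<Psi> \<in> Uspace N. (\<forall>l. \<bar>\<Psi> l\<bar> \<le> 1) \<and> (\<exists>l \<in> {- int N + 1 .. int N}. \<bar>\<Psi> l\<bar> = 1)}"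

lemma compact_unit_Uspace: "compact (unit_Uspace N)"
proof -
  have "unit_Uspace N = {\<Psi>. \<forall>l. \<bar>\<Psi> l\<bar> \<le> 1}
      \<inter> (Uspace N \<inter> (\<Union>l \<in> {- int N + 1 .. int N}. {\<Psi>. \<bar>\<Psi> l\<bar> = 1}))"
    unfolding unit_Uspace_def by blast
  moreover have "closed (\<Union>l \<in> {- int N + 1 .. int N}. {\<Psi>::int \<Rightarrow> real. \<bar>\<Psi> l\<bar> = 1})"
    by (intro closed_UN finite_atLeastAtMost_int ballI closed_Collect_eq continuous_intros
        continuous_on_product_coordinates)
  ultimately show ?thesis
    using compact_Int_closed[OF compact_unit_box closed_Int[OF closed_Uspace]] by simp
qed

lemma unit_Uspace_subset: "unit_Uspace N \<subseteq> Uspace N - {\<lambda>_. 0}"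
  unfolding unit_Uspace_def by fastforce

lemma unit_Uspace_rescale:
  assumes "\<Psi> \<in> Uspace N - {\<lambda>_. 0}" and "N \<ge> 1"
  obtains c :: real where "c \<noteq> 0" and "(\<lambda>l. c * \<Psi> l) \<in> unit_Uspace N"
proof -
  let ?W = "{- int N + 1 .. int N}"
  have per: "periodic N \<Psi>" and mean: "period_sum N \<Psi> = 0"
    using assms(1) by (auto simp: Uspace_iff)
  have "finite ?W" and "?W \<noteq> {}"
    using assms(2) by auto
  then have "Max ((\<lambda>j. \<bar>\<Psi> j\<bar>) ` ?W) \<in> (\<lambda>j. \<bar>\<Psi> j\<bar>) ` ?W"
    by (intro Max_in) auto
  then obtain m where m: "m \<in> ?W" and "\<bar>\<Psi> m\<bar> = Max ((\<lambda>j. \<bar>\<Psi> j\<bar>) ` ?W)"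
    by auto
  then have max: "\<bar>\<Psi> j\<bar> \<le> \<bar>\<Psi> m\<bar>" if "j \<in> ?W" for j
    using that \<open>finite ?W\<close> by simp
  have bound: "\<bar>\<Psi> l\<bar> \<le> \<bar>\<Psi> m\<bar>" for l
  proof -
    obtain j where "j \<in> ?W" and "\<Psi> l = \<Psi> j"
      using periodic_window[OF per assms(2)] by blast
    then show ?thesis
      using max by simp
  qed
  have "\<Psi> \<noteq> (\<lambda>_. 0)"
    using assms(1) by blast
  then obtain l0 where "\<Psi> l0 \<noteq> 0"
    by (auto simp: fun_eq_iff)
  then have "\<Psi> m \<noteq> 0"
    using bound[of l0] by auto
  show ?thesis
  proof
    show "1 / \<bar>\<Psi> m\<bar> \<noteq> 0"
      using \<open>\<Psi> m \<noteq> 0\<close> by simp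
    have "(\<lambda>l. 1 / \<bar>\<Psi> m\<bar> * \<Psi> l) \<in> Uspace N"
      using per mean period_sum_cmult[of N "1 / \<bar>\<Psi> m\<bar>" \<Psi>]
      by (simp add: Uspace_iff periodic_def)
    moreover have "\<bar>1 / \<bar>\<Psi> m\<bar> * \<Psi> l\<bar> \<le> 1" for l
      using bound[of l] \<open>\<Psi> m \<noteq> 0\<close> by (simp add: abs_mult field_simps)
    moreover have "\<bar>1 / \<bar>\<Psi> m\<bar> * \<Psi> m\<bar> = 1"
      using \<open>\<Psi> m \<noteq> 0\<close> by (simp add: abs_mult)
    ultimately show "(\<lambda>l. 1 / \<bar>\<Psi> m\<bar> * \<Psi> l) \<in> unit_Uspace N"
      unfolding unit_Uspace_def using m by blast
  qed
qed

lemma alternating_in_Uspace: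
  assumes "N \<ge> 1"
  shows "(\<lambda>l. if even l then 1 else - 1) \<in> Uspace N - {\<lambda>_. 0}"
proof -
  define alt :: "int \<Rightarrow> real" where "alt l = (if even l then 1 else - 1)" for l
  have per: "periodic N alt"
    unfolding periodic_def alt_def by simp
  have "period_sum N alt = period_sum N (\<lambda>l. alt (l + 1))"
    using period_sum_shift1[OF per assms] by simp
  also have "(\<lambda>l. alt (l + 1)) = (\<lambda>l. - 1 * alt l)"
    by (simp add: alt_def fun_eq_iff)
  finally have "period_sum N alt = 0"
    by (simp only: period_sum_cmult)
  moreover have "alt \<noteq> (\<lambda>_. 0)"
    by (auto simp: fun_eq_iff alt_def)
  ultimately show ?thesis
    using per by (simp add: Uspace_iff alt_def[abs_def])
qed

lemma rayleigh_attains_min: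
  assumes "N \<ge> 1"
  obtains \<Psi>0 where "\<Psi>0 \<in> Uspace N - {\<lambda>_. 0}"
    and "\<And>\<Psi>. \<Psi> \<in> Uspace N - {\<lambda>_. 0} \<Longrightarrow> rayleigh N \<Psi>0 \<le> rayleigh N \<Psi>"
proof -
  have "unit_Uspace N \<noteq> {}"
    using unit_Uspace_rescale[OF alternating_in_Uspace[OF assms] assms] by blast
  moreover have "continuous_on (unit_Uspace N) (rayleigh N)"
    unfolding rayleigh_def[abs_def]
    using unit_Uspace_subset grad_sq_pos assms
    by (intro continuous_intros continuous_on_subset[OF continuous_on_grad_sq]
        continuous_on_subset[OF continuous_on_grad_diff_sq]) force+
  ultimately obtain \<Psi>0 where \<Psi>0: "\<Psi>0 \<in> unit_Uspace N"
    and min: "\<And>\<Psi>. \<Psi> \<in> unit_Uspace N \<Longrightarrow> rayleigh N \<Psi>0 \<le> rayleigh N \<Psi>"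
    using continuous_attains_inf[OF compact_unit_Uspace] by metis
  show ?thesis
  proof
    show "\<Psi>0 \<in> Uspace N - {\<lambda>_. 0}"
      using \<Psi>0 unit_Uspace_subset by blast
    fix \<Psi> assume "\<Psi> \<in> Uspace N - {\<lambda>_. 0}"
    then obtain c where "c \<noteq> 0" and "(\<lambda>l. c * \<Psi> l) \<in> unit_Uspace N"
      using unit_Uspace_rescale assms by blast
    then show "rayleigh N \<Psi>0 \<le> rayleigh N \<Psi>"
      using min rayleigh_scale by metis
  qed
qed

lemma l2eps_quotient:
  assumes "N \<ge> 1" and "grad_sq N \<Psi> > 0"
  shows "l2eps N (1 / real N) (dq (1 / real N) (dq (1 / real N) \<Psi>))
           / l2eps N (1 / real N) (dq (1 / real N) \<Psi>)
         = real N * sqrt (rayleigh N \<Psi>)"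
proof -
  define e where "e = 1 / real N"
  have N: "real N > 0"
    using assms(1) by simp
  have "dq e (dq e \<Psi>) l = real N * (dq e \<Psi> l - dq e \<Psi> (l - 1))" for l
    unfolding dq_def[of e "dq e \<Psi>"] by (simp add: e_def)
  then have "(\<Sum>l = - int N + 1 .. int N. (dq e (dq e \<Psi>) l)\<^sup>2)
      = period_sum N (\<lambda>l. (real N)\<^sup>2 * (dq e \<Psi> l - dq e \<Psi> (l - 1))\<^sup>2)"
    unfolding period_sum_def by (simp add: power_mult_distrib)
  then have diff: "e * (\<Sum>l = - int N + 1 .. int N. (dq e (dq e \<Psi>) l)\<^sup>2) = real N * grad_diff_sq N \<Psi>"
    unfolding period_sum_cmult grad_diff_sq_def e_def using N by (simp add: power2_eq_square)
  have grad: "e * (\<Sum>l = - int N + 1 .. int N. (dq e \<Psi> l)\<^sup>2) = grad_sq N \<Psi> / real N"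
    unfolding grad_sq_def period_sum_def e_def by simp
  have "l2eps N e (dq e (dq e \<Psi>)) / l2eps N e (dq e \<Psi>)
      = sqrt (real N * grad_diff_sq N \<Psi> / (grad_sq N \<Psi> / real N))"
    unfolding l2eps_def diff grad by (rule real_sqrt_divide[symmetric])
  also have "\<dots> = sqrt ((real N)\<^sup>2 * rayleigh N \<Psi>)"
    unfolding rayleigh_def using N assms(2) by (simp add: field_simps power2_eq_square)
  also have "\<dots> = real N * sqrt (rayleigh N \<Psi>)"
    by (simp add: real_sqrt_mult)
  finally show ?thesis
    unfolding e_def .
qed

lemma mu_eps_sq_eq_min_rayleigh:
  assumes "N \<ge> 1"
  obtains \<Psi>0 where "\<Psi>0 \<in> Uspace N - {\<lambda>_. 0}"
    and "\<And>\<Psi>. \<Psi> \<in> Uspace N - {\<lambda>_. 0} \<Longrightarrow> rayleigh N \<Psi>0 \<le> rayleigh N \<Psi>"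
    and "(1 / real N)\<^sup>2 * (mu_eps N)\<^sup>2 = rayleigh N \<Psi>0"
proof -
  let ?U = "Uspace N - {\<lambda>_. 0}"
  obtain \<Psi>0 where \<Psi>0: "\<Psi>0 \<in> ?U" and min: "\<And>\<Psi>. \<Psi> \<in> ?U \<Longrightarrow> rayleigh N \<Psi>0 \<le> rayleigh N \<Psi>"
    using rayleigh_attains_min[OF assms] by blast
  let ?q = "\<lambda>\<Psi>. l2eps N (1 / real N) (dq (1 / real N) (dq (1 / real N) \<Psi>))
    / l2eps N (1 / real N) (dq (1 / real N) \<Psi>)"
  have "mu_eps N = Inf (?q ` ?U)"
    unfolding mu_eps_def Let_def by (intro arg_cong[where f = Inf]) blast
  also have "?q ` ?U = (\<lambda>\<Psi>. real N * sqrt (rayleigh N \<Psi>)) ` ?U"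
    using assms by (intro image_cong) (auto simp: grad_sq_pos l2eps_quotient)
  also have "Inf \<dots> = real N * sqrt (rayleigh N \<Psi>0)"
    using \<Psi>0 min by (intro cInf_eq_minimum) (auto intro: mult_left_mono)
  finally have "mu_eps N = real N * sqrt (rayleigh N \<Psi>0)" .
  moreover have "rayleigh N \<Psi>0 \<ge> 0"
    unfolding rayleigh_def grad_sq_def grad_diff_sq_def by (simp add: period_sum_nonneg)
  ultimately have "(1 / real N)\<^sup>2 * (mu_eps N)\<^sup>2 = rayleigh N \<Psi>0"
    using assms by (simp add: power_mult_distrib power_divide)
  with \<Psi>0 min show ?thesis
    using that by blast
qed

lemma stable3_iff_energy3_pos:
  assumes "N \<ge> 1"
  shows "stable3 N p1 p2 p3
           \<longleftrightarrow> (\<forall>u \<in> Uspace N - {\<lambda>_. 0}. energy3 N p1 p2 p3 (dq (1 / real N) u) > 0)"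
  using assms unfolding stable3_def Let_def energy3_def period_sum_def
  by (simp add: zero_less_divide_iff)

lemma stable3_imp_threshold:
  assumes "N \<ge> 1" and "p3 \<le> 0" and "stable3 N p1 p2 p3"
  shows "(p1 + 4 * p2 + 9 * p3) - (1 / real N)\<^sup>2 * (mu_eps N)\<^sup>2 * (p2 + 6 * p3) > 0"
proof -
  obtain \<Psi>0 where \<Psi>0: "\<Psi>0 \<in> Uspace N - {\<lambda>_. 0}"
    and g0: "(1 / real N)\<^sup>2 * (mu_eps N)\<^sup>2 = rayleigh N \<Psi>0"
    using mu_eps_sq_eq_min_rayleigh[OF assms(1)] by blast
  have pos: "grad_sq N \<Psi>0 > 0"
    using \<Psi>0 assms(1) grad_sq_pos by blast
  have "0 < energy3 N p1 p2 p3 (dq (1 / real N) \<Psi>0)"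
    using assms(3) \<Psi>0 stable3_iff_energy3_pos[OF assms(1)] by blast
  also have "\<dots> \<le> (p1 + 4 * p2 + 9 * p3) * grad_sq N \<Psi>0 - (p2 + 6 * p3) * grad_diff_sq N \<Psi>0"
    using energy3_bounds(1)[OF periodic_dq assms(1) assms(2)] \<Psi>0
    unfolding grad_sq_def grad_diff_sq_def by (simp add: Uspace_iff)
  also have "\<dots> = ((p1 + 4 * p2 + 9 * p3) - rayleigh N \<Psi>0 * (p2 + 6 * p3)) * grad_sq N \<Psi>0"
    using pos unfolding rayleigh_def by (simp add: field_simps)
  finally show ?thesis
    using pos g0 by (simp add: zero_less_mult_iff)
qed

lemma threshold_imp_stable3:
  assumes "N \<ge> 1" and "p2 \<le> 0" and "p3 \<le> 0"
    and "(p1 + 4 * p2 + 9 * p3) - (1 / real N)\<^sup>2 * (mu_eps N)\<^sup>2 * (p2 + 2 * p3) > 0"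
  shows "stable3 N p1 p2 p3"
  unfolding stable3_iff_energy3_pos[OF assms(1)]
proof
  fix u assume u: "u \<in> Uspace N - {\<lambda>_. 0}"
  obtain \<Psi>0 where min: "\<And>\<Psi>. \<Psi> \<in> Uspace N - {\<lambda>_. 0} \<Longrightarrow> rayleigh N \<Psi>0 \<le> rayleigh N \<Psi>"
    and g0: "(1 / real N)\<^sup>2 * (mu_eps N)\<^sup>2 = rayleigh N \<Psi>0"
    using mu_eps_sq_eq_min_rayleigh[OF assms(1)] by blast
  have pos: "grad_sq N u > 0"
    using u assms(1) grad_sq_pos by blast
  have "rayleigh N \<Psi>0 * grad_sq N u \<le> grad_diff_sq N u"
    using min[OF u] pos unfolding rayleigh_def by (simp add: le_divide_eq)
  then have "(p2 + 2 * p3) * grad_diff_sq N u \<le> (p2 + 2 * p3) * (rayleigh N \<Psi>0 * grad_sq N u)"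
    using assms(2,3) by (intro mult_left_mono_neg) auto
  then have "0 < (p1 + 4 * p2 + 9 * p3) * grad_sq N u - (p2 + 2 * p3) * grad_diff_sq N u"
    using mult_pos_pos[OF assms(4) pos] g0 by (simp add: algebra_simps)
  also have "\<dots> \<le> energy3 N p1 p2 p3 (dq (1 / real N) u)"
    using energy3_bounds(2)[OF periodic_dq assms(1) assms(3)] u
    unfolding grad_sq_def grad_diff_sq_def by (simp add: Uspace_iff)
  finally show "energy3 N p1 p2 p3 (dq (1 / real N) u) > 0" .
qed

lemma stable3_threshold:
  assumes "N \<ge> 1" and "p2 \<le> 0" and "p3 \<le> 0"
  shows "\<exists>\<eta>. 2 \<le> \<eta> \<and> \<eta> \<le> 6 \<and>
    (stable3 N p1 p2 p3 \<longleftrightarrow> (p1 + 4 * p2 + 9 * p3) - (1 / real N)\<^sup>2 * (mu_eps N)\<^sup>2 * (p2 + \<eta> * p3) > 0)"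
proof (cases "stable3 N p1 p2 p3")
  case True
  then show ?thesis
    using stable3_imp_threshold[OF assms(1,3)] by (intro exI[of _ 6]) auto
next
  case False
  then show ?thesis
    using threshold_imp_stable3[OF assms] by (intro exI[of _ 2]) auto
qed

theorem theorem5p1:
  fixes N :: nat and F :: real and \<phi> :: "real \<Rightarrow> real"
  assumes "N \<ge> 1"
    and "F > 0"
    and "\<forall>x>0. \<phi> differentiable (at x)"
    and "\<forall>x>0. deriv \<phi> differentiable (at x)"
    and "deriv (deriv \<phi>) (2 * F) \<le> 0"
    and "deriv (deriv \<phi>) (3 * F) \<le> 0"
    and "\<forall>k::nat. k \<ge> 4 \<longrightarrow> deriv (deriv \<phi>) (real k * F) = 0"
  shows "\<exists>\<eta>. 2 \<le> \<eta> \<and> \<eta> \<le> 6 \<and>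
           (stable3 N (deriv (deriv \<phi>) F) (deriv (deriv \<phi>) (2 * F)) (deriv (deriv \<phi>) (3 * F))
            \<longleftrightarrow>
            (deriv (deriv \<phi>) F + 4 * deriv (deriv \<phi>) (2 * F) + 9 * deriv (deriv \<phi>) (3 * F))
              - (1 / real N)\<^sup>2 * (mu_eps N)\<^sup>2
                * (deriv (deriv \<phi>) (2 * F) + \<eta> * deriv (deriv \<phi>) (3 * F)) > 0)"
  \<comment> \<open>The model only sees \<open>\<phi>''\<close> at \<open>F, 2F, 3F\<close>; of the hypotheses on \<open>\<phi>\<close>
    only the signs at \<open>2F\<close> and \<open>3F\<close> are needed.\<close>
  using stable3_threshold assms(1,5,6) by blast

end
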